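(* Let $s>0$ and let $f,g\colon\mathbb R^d\to[0,\infty)$ be proper log-concave functions with $f\le g$. Then the Löwner $s$-problem and the positive position Löwner $s$-problem for $f$ and $g$ have solutions (the minimum is attained).
   Context: Proper: upper semi-continuous with finite positive integral; log-concave: $\ln f$ concave. Positions $\mathcal P(g)=\{x\mapsto\alpha g(Ax+a):A$ non-singular, $\alpha>0,a\in\mathbb R^d\}$; positive positions $\mathcal P^+(g)$: same with $A$ positive definite. Löwner $s$-problem: minimize $\int_{\mathbb R^d}h^s$ over $h\in\mathcal P(g)$ subject to $f\le h$ pointwise; positive position version: over $h\in\mathcal P^+(g)$. *)

theory Defs
  imports "HOL-Analysis.Analysis"
begin

definition usc :: "(real^'n \<Rightarrow> real) \<Rightarrow> bool" where
  "usc f \<longleftrightarrow> (\<forall>t. open {x. f x < t})"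

definition lint :: "(real^'n \<Rightarrow> real) \<Rightarrow> ennreal" where
  "lint f = (\<integral>\<^sup>+ x. ennreal (f x) \<partial>lborel)"

definition proper_fun :: "(real^'n \<Rightarrow> real) \<Rightarrow> bool" where
  "proper_fun f \<longleftrightarrow> usc f \<and> 0 < lint f \<and> lint f < \<infinity>"

text \<open>Log-concave: ln f concave (with ln 0 = -\<infinity>), for nonnegative f.\<close>
definition log_concave :: "(real^'n \<Rightarrow> real) \<Rightarrow> bool" where
  "log_concave f \<longleftrightarrow> (\<forall>x y. \<forall>t\<in>{0<..<1::real}.
      f x powr (1 - t) * f y powr t \<le> f ((1 - t) *\<^sub>R x + t *\<^sub>R y))"

definition pos_def_mat :: "real^'n^'n \<Rightarrow> bool" where
  "pos_def_mat A \<longleftrightarrow> transpose A = A \<and> (\<forall>x. x \<noteq> 0 \<longrightarrow> 0 < x \<bullet> (A *v x))"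

definition positions :: "(real^'n \<Rightarrow> real) \<Rightarrow> (real^'n \<Rightarrow> real) set" where
  "positions g = {(\<lambda>x. \<alpha> * g (A *v x + a)) | A \<alpha> a. invertible A \<and> \<alpha> > 0}"

definition pos_positions :: "(real^'n \<Rightarrow> real) \<Rightarrow> (real^'n \<Rightarrow> real) set" where
  "pos_positions g = {(\<lambda>x. \<alpha> * g (A *v x + a)) | A \<alpha> a. pos_def_mat A \<and> \<alpha> > 0}"

definition solves_loewner :: "real \<Rightarrow> (real^'n \<Rightarrow> real) set \<Rightarrow> (real^'n \<Rightarrow> real) \<Rightarrow> (real^'n \<Rightarrow> real) \<Rightarrow> bool" where
  "solves_loewner s P f h \<longleftrightarrow> h \<in> P \<and> (\<forall>x. f x \<le> h x) \<and>
     (\<forall>h'\<in>P. (\<forall>x. f x \<le> h' x) \<longrightarrow> lint (\<lambda>x. h x powr s) \<le> lint (\<lambda>x. h' x powr s))"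

end

theory Submission
  imports Defs
begin

text \<open>By the linear change of variables, the objective at the position \<open>\<lambda>x. \<alpha> * g (A *v x + a)\<close> is
  \<open>\<alpha> powr s / \<bar>det A\<bar>\<close> times \<open>\<integral> g powr s\<close>, so it suffices to minimise this cost over the
  parameters \<open>(A, \<alpha>, a)\<close> whose position lies above \<open>f\<close>; this is a closed condition because \<open>g\<close>
  is upper semi-continuous. Only parameters costing at most as much as \<open>g\<close> itself matter, and
  log-concavity makes them bounded. Since \<open>f \<ge> t\<close> on a ball, \<open>\<alpha> \<ge> t / sup g\<close>, and the position
  maps the ball into \<open>{x. t / \<alpha> \<le> g x}\<close>. The volume of this set is at least \<open>\<bar>det A\<bar> \<ge> \<alpha> powr s\<close>
  times that of the ball, but grows only polylogarithmically in \<open>\<alpha>\<close>; so \<open>\<alpha>\<close> is bounded above and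
  \<open>\<bar>det A\<bar>\<close> below. Finally the ball is mapped into a fixed bounded convex superlevel set of \<open>g\<close>,
  which bounds \<open>A\<close> and \<open>a\<close>. On the resulting compact set the continuous cost attains its minimum.
  For positive positions one minimises over the closed set of positive semidefinite matrices; the
  minimiser is invertible, hence positive definite.\<close>

lemma det_matrix_shear:
  fixes m n :: "'n::finite"
  assumes "m \<noteq> n"
  shows "det (matrix (\<lambda>x::real^'n. \<chi> i. if i = m then x $ m + x $ n else x $ i)) = 1"
proof -
  have "matrix (\<lambda>x::real^'n. \<chi> i. if i = m then x $ m + x $ n else x $ i)
      = (\<chi> k. if k = m then row m (mat 1) + 1 *s row n (mat 1) else row k (mat 1))"
    by (auto simp: matrix_def vec_eq_iff row_def mat_def axis_def)
  then show ?thesis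
    using det_row_operation[OF assms, of "mat 1 :: real^'n^'n" 1] by simp
qed

lemma measure_linear_image_if_cbox:
  fixes f :: "'a::euclidean_space \<Rightarrow> 'a"
  assumes "linear f"
    and "\<And>a b. measure lebesgue (f ` cbox a b) = c * measure lebesgue (cbox a b)"
  shows "\<forall>S \<in> lmeasurable. f ` S \<in> lmeasurable \<and> measure lebesgue (f ` S) = c * measure lebesgue S"
  using measure_linear_sufficient[OF assms(1) _ assms(2)] by simp

lemma measure_linear_image_swap:
  fixes m n :: "'n::finite"
  defines "h \<equiv> \<lambda>x::real^'n. \<chi> i. x $ Transposition.transpose m n i"
  assumes "m \<noteq> n"
  shows "\<forall>S \<in> lmeasurable. h ` S \<in> lmeasurable \<and> measure lebesgue (h ` S) = \<bar>det (matrix h)\<bar> * measure lebesgue S"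
proof -
  have lin: "linear h"
    unfolding h_def by (rule linearI) (simp_all add: vec_eq_iff)
  have box: "h ` cbox a b = cbox (h a) (h b)" for a b
    unfolding h_def
    by (auto simp: image_iff lambda_swap_Galois mem_box_cart) (metis transpose_involutory)+
  have "measure lebesgue (h ` cbox a b) = 1 * measure lebesgue (cbox a b)" for a b
  proof (cases "cbox a b = {}")
    case False
    then have "cbox (h a) (h b) \<noteq> {}"
      unfolding box[symmetric] by blast
    then show ?thesis
      using False prod.permute[OF permutes_swap_id, where S=UNIV and g="\<lambda>i. (b - a) $ i"]
      unfolding box by (simp add: content_cbox_cart h_def)
  qed simp
  moreover have "matrix h = transpose (\<chi> i j. mat 1 $ i $ Transposition.transpose m n j)"
    unfolding h_def by (auto simp: vec_eq_iff matrix_def transpose_def axis_def mat_def)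
  then have "\<bar>det (matrix h)\<bar> = 1"
    by (simp add: det_permute_columns permutes_swap_id sign_swap_id abs_mult)
  ultimately show ?thesis
    using measure_linear_image_if_cbox[OF lin] by (metis mult_1)
qed

lemma measure_linear_image_shear:
  fixes m n :: "'n::finite"
  defines "h \<equiv> \<lambda>x::real^'n. \<chi> i. if i = m then x $ m + x $ n else x $ i"
  assumes "m \<noteq> n"
  shows "\<forall>S \<in> lmeasurable. h ` S \<in> lmeasurable \<and> measure lebesgue (h ` S) = \<bar>det (matrix h)\<bar> * measure lebesgue S"
proof -
  have lin: "linear h"
    unfolding h_def by (rule linearI) (auto simp: vec_eq_iff algebra_simps)
  have "measure lebesgue (h ` cbox a b) = 1 * measure lebesgue (cbox a b)" for a b
  proof (cases "cbox a b = {}")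
    case False
    define v :: "real^'n" where "v = axis n (a $ n)"
    have box: "cbox a b = (+) v ` cbox (a - v) (b - v)"
      using cbox_translation[of v "a - v" "b - v"] by simp
    have "cbox (a - v) (b - v) \<noteq> {}"
      using False unfolding box by blast
    moreover have "0 \<le> (a - v) $ n"
      by (simp add: v_def)
    ultimately have "measure lebesgue (h ` cbox (a - v) (b - v)) = measure lebesgue (cbox (a - v) (b - v))"
      unfolding h_def by (rule measure_shear_interval[OF assms(2)])
    moreover have "h ` cbox a b = (+) (h v) ` h ` cbox (a - v) (b - v)"
      unfolding box image_image by (simp only: linear_add[OF lin])
    ultimately show ?thesis
      by (simp only: box measure_translation mult_1)
  qed simp
  then have "\<forall>S \<in> lmeasurable. h ` S \<in> lmeasurable \<and> measure lebesgue (h ` S) = 1 * measure lebesgue S"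
    by (rule measure_linear_image_if_cbox[OF lin])
  then show ?thesis
    using det_matrix_shear[OF assms(2), folded h_def] by simp
qed

text \<open>\<open>measure_linear_image\<close> in \<open>Change_Of_Vars\<close> is stated for index types carrying a
  well-order, which it uses only to compute the determinant of a shear.\<close>

lemma measure_linear_image_cart:
  fixes f :: "real^'n \<Rightarrow> real^'n"
  assumes "linear f" and "S \<in> lmeasurable"
  shows "f ` S \<in> lmeasurable \<and> measure lebesgue (f ` S) = \<bar>det (matrix f)\<bar> * measure lebesgue S"
proof -
  let ?P = "\<lambda>f::real^'n \<Rightarrow> real^'n. \<forall>S \<in> lmeasurable.
    f ` S \<in> lmeasurable \<and> measure lebesgue (f ` S) = \<bar>det (matrix f)\<bar> * measure lebesgue S"
  have "?P f"
  proof (rule induct_linear_elementary[OF assms(1)])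
    fix f g :: "real^'n \<Rightarrow> real^'n"
    assume "linear f" "linear g" and Pf: "?P f" and Pg: "?P g"
    show "?P (f \<circ> g)"
    proof
      fix S :: "(real^'n) set"
      assume "S \<in> lmeasurable"
      then have "g ` S \<in> lmeasurable" "measure lebesgue (g ` S) = \<bar>det (matrix g)\<bar> * measure lebesgue S"
        using Pg by auto
      then show "(f \<circ> g) ` S \<in> lmeasurable \<and>
          measure lebesgue ((f \<circ> g) ` S) = \<bar>det (matrix (f \<circ> g))\<bar> * measure lebesgue S"
        unfolding image_comp[symmetric] matrix_compose[OF \<open>linear g\<close> \<open>linear f\<close>]
        using Pf by (simp add: abs_mult det_mul)
    qed
  next
    fix f :: "real^'n \<Rightarrow> real^'n" and i
    assume f: "linear f" and "\<And>x. f x $ i = 0"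
    then have "\<not> surj f"
      by (metis one_neq_zero vec_component surjE)
    then have "\<not> inj f"
      using f linear_injective_imp_surjective by blast
    then show "?P f"
      using f det_nz_iff_inj[OF f] negligible_linear_singular_image[OF f]
      by (simp add: negligible_imp_measurable negligible_imp_measure0 negligible_subset)
  next
    fix c :: "'n \<Rightarrow> real"
    show "?P (\<lambda>x. \<chi> i. c i * x $ i)"
      by (simp add: measurable_stretch measure_stretch matrix_def axis_def det_diagonal)
  qed (use measure_linear_image_swap measure_linear_image_shear in blast)+
  then show ?thesis
    using assms(2) by blast
qed

lemma lborel_affine_matrix:
  fixes A :: "real^'n^'n" and a :: "real^'n"
  assumes "invertible A"
  shows "lborel = density (distr lborel borel (\<lambda>x. A *v x + a)) (\<lambda>_. ennreal \<bar>det A\<bar>)"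
proof (rule lborel_eqI)
  obtain B where AB: "A ** B = mat 1" "B ** A = mat 1"
    using assms invertible_def by blast
  have detAB: "\<bar>det A\<bar> * \<bar>det B\<bar> = 1"
    using det_mul[of A B] AB by (simp add: abs_mult[symmetric])
  let ?T = "\<lambda>x. A *v x + a"
  have T [measurable]: "?T \<in> borel \<rightarrow>\<^sub>M borel"
    by (intro borel_measurable_continuous_onI continuous_intros)
  fix l u :: "real^'n"
  assume le: "\<And>b. b \<in> Basis \<Longrightarrow> l \<bullet> b \<le> u \<bullet> b"
  let ?S = "(\<lambda>x. x - a) ` box l u"
  have pre: "?T -` box l u = (*v) B ` ?S"
  proof (rule set_eqI)
    fix x
    show "x \<in> ?T -` box l u \<longleftrightarrow> x \<in> (*v) B ` ?S"
      by (auto simp: image_iff matrix_vector_mul_assoc AB intro!: bexI[of _ "A *v x + a"])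
  qed
  have S: "?S \<in> lmeasurable" "measure lebesgue ?S = (\<Prod>b\<in>Basis. (u - l) \<bullet> b)"
    using measure_lborel_box[OF le]
    by (simp_all add: measurable_translation_subtract measure_translation_subtract measure_completion)
  have "emeasure lborel (?T -` box l u) = emeasure lebesgue ((*v) B ` ?S)"
    unfolding pre[symmetric] using measurable_sets[OF T, of "box l u"] by simp
  also have "\<dots> = ennreal (\<bar>det B\<bar> * (\<Prod>b\<in>Basis. (u - l) \<bullet> b))"
    using measure_linear_image_cart[OF matrix_vector_mul_linear S(1), of B] S(2)
    by (simp add: emeasure_eq_measure2)
  finally show "emeasure (density (distr lborel borel ?T) (\<lambda>_. ennreal \<bar>det A\<bar>)) (box l u)
      = ennreal (\<Prod>b\<in>Basis. (u - l) \<bullet> b)"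
    using detAB
    by (simp add: emeasure_density emeasure_distr nn_integral_cmult_indicator
        ennreal_mult'[symmetric] mult.assoc[symmetric])
qed simp

lemma nn_integral_affine_matrix:
  fixes A :: "real^'n^'n" and G :: "real^'n \<Rightarrow> ennreal"
  assumes "invertible A" and [measurable]: "G \<in> borel_measurable borel"
  shows "(\<integral>\<^sup>+x. G x \<partial>lborel) = ennreal \<bar>det A\<bar> * (\<integral>\<^sup>+x. G (A *v x + a) \<partial>lborel)"
proof -
  let ?T = "\<lambda>x. A *v x + a"
  have [measurable]: "?T \<in> borel \<rightarrow>\<^sub>M borel"
    by (intro borel_measurable_continuous_onI continuous_intros)
  have "(\<integral>\<^sup>+x. G x \<partial>lborel) = (\<integral>\<^sup>+x. G x \<partial>density (distr lborel borel ?T) (\<lambda>_. ennreal \<bar>det A\<bar>))"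
    by (subst lborel_affine_matrix[OF assms(1), of a]) (rule refl)
  also have "\<dots> = (\<integral>\<^sup>+x. ennreal \<bar>det A\<bar> * G (?T x) \<partial>lborel)"
    by (simp add: nn_integral_density nn_integral_distr)
  finally show ?thesis
    by (simp add: nn_integral_cmult)
qed

lemma emeasure_affine_matrix:
  fixes A :: "real^'n^'n"
  assumes "invertible A" and "E \<in> sets borel"
  shows "emeasure lborel E = ennreal \<bar>det A\<bar> * emeasure lborel {x. A *v x + a \<in> E}"
proof -
  have [measurable]: "(\<lambda>x. A *v x + a) \<in> borel \<rightarrow>\<^sub>M borel"
    by (intro borel_measurable_continuous_onI continuous_intros)
  have "{x. A *v x + a \<in> E} \<in> sets lborel"
    using assms(2) by measurable
  moreover have "(\<lambda>x. indicator E (A *v x + a)) = (indicator {x. A *v x + a \<in> E} :: _ \<Rightarrow> ennreal)"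
    by (auto simp: indicator_def)
  ultimately show ?thesis
    using nn_integral_affine_matrix[OF assms(1) borel_measurable_indicator[OF assms(2)], of a] assms(2)
    by (simp add: nn_integral_indicator)
qed

lemma det_mult_emeasure_le:
  fixes A :: "real^'n^'n"
  assumes "invertible A" and "E \<in> sets borel" and "S \<subseteq> {x. A *v x + a \<in> E}"
  shows "ennreal \<bar>det A\<bar> * emeasure lborel S \<le> emeasure lborel E"
proof -
  have [measurable]: "(\<lambda>x. A *v x + a) \<in> borel \<rightarrow>\<^sub>M borel"
    by (intro borel_measurable_continuous_onI continuous_intros)
  have "{x. A *v x + a \<in> E} \<in> sets lborel"
    using assms(2) by measurable
  then show ?thesis
    using emeasure_affine_matrix[OF assms(1,2), of a] assms(3)
    by (simp add: emeasure_mono mult_left_mono)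
qed

lemma usc_borel_measurable:
  assumes "usc f"
  shows "f \<in> borel_measurable borel"
  using assms unfolding usc_def by (simp add: borel_measurable_iff_less)

lemma closed_superlevel_usc:
  assumes "usc f"
  shows "closed {x. t \<le> f x}"
proof -
  have "- {x. t \<le> f x} = {x. f x < t}"
    by auto
  then show ?thesis
    using assms unfolding usc_def closed_def by metis
qed

lemma sets_superlevel_usc:
  assumes "usc f"
  shows "{x. t \<le> f x} \<in> sets borel"
  using closed_superlevel_usc[OF assms] by (rule borel_closed)

lemma lint_ge_mult_emeasure:
  assumes "S \<in> sets borel" and "S \<subseteq> {x. t \<le> f x}"
  shows "ennreal t * emeasure lborel S \<le> lint f"
proof -
  have "ennreal t * emeasure lborel S = (\<integral>\<^sup>+x. ennreal t * indicator S x \<partial>lborel)"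
    using assms(1) by (simp add: nn_integral_cmult_indicator)
  also have "\<dots> \<le> lint f"
    unfolding lint_def
    by (rule nn_integral_mono) (use assms(2) in \<open>auto simp: indicator_def intro: ennreal_leI\<close>)
  finally show ?thesis .
qed

lemma emeasure_superlevel_finite:
  assumes "usc f" and "lint f < \<infinity>" and "0 < u"
  shows "emeasure lborel {x. u \<le> f x} < \<infinity>"
proof -
  have "ennreal u * emeasure lborel {x. u \<le> f x} < \<infinity>"
    using lint_ge_mult_emeasure[of "{x. u \<le> f x}" u f] sets_superlevel_usc[OF assms(1)] assms(2)
    by (simp add: le_less_trans)
  then show ?thesis
    using assms(3) by (auto simp: ennreal_mult_less_top top.not_eq_extremum)
qed

lemma log_concave_powr_le:
  assumes "log_concave f" and "0 \<le> p" "p \<le> f x" and "0 \<le> q" "q \<le> f y" and "0 < u" "u < 1"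
  shows "p powr (1 - u) * q powr u \<le> f ((1 - u) *\<^sub>R x + u *\<^sub>R y)"
proof -
  have "p powr (1 - u) * q powr u \<le> f x powr (1 - u) * f y powr u"
    using assms(2-) by (intro mult_mono powr_mono2) auto
  also have "\<dots> \<le> f ((1 - u) *\<^sub>R x + u *\<^sub>R y)"
    using assms(1,6,7) unfolding log_concave_def by auto
  finally show ?thesis .
qed

lemma convex_superlevel_log_concave:
  assumes "log_concave f" and "0 < t"
  shows "convex {x. t \<le> f x}"
  unfolding convex_alt
proof (intro ballI allI impI)
  fix x y and u :: real
  assume x: "x \<in> {x. t \<le> f x}" and y: "y \<in> {x. t \<le> f x}" and u: "0 \<le> u \<and> u \<le> 1"
  show "(1 - u) *\<^sub>R x + u *\<^sub>R y \<in> {x. t \<le> f x}"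
  proof (cases "u = 0 \<or> u = 1")
    case False
    then have "t powr (1 - u) * t powr u \<le> f ((1 - u) *\<^sub>R x + u *\<^sub>R y)"
      using x y u assms by (intro log_concave_powr_le) auto
    then show ?thesis
      using assms(2) by (simp add: powr_add[symmetric])
  qed (use x y in auto)
qed

lemma superlevel_not_null:
  assumes "0 < lint f"
  shows "\<exists>t>0. {x. t \<le> f x} \<notin> null_sets lborel"
proof (rule ccontr)
  assume "\<not> ?thesis"
  then have "AE x in lborel. x \<notin> {x. inverse (real (Suc n)) \<le> f x}" for n
    by (intro AE_not_in) simp
  then have "AE x in lborel. \<forall>n. x \<notin> {x. inverse (real (Suc n)) \<le> f x}"
    by (simp add: AE_all_countable)
  then have AE0: "AE x in lborel. ennreal (f x) = 0"
  proof (rule AE_mp, intro AE_I2 impI)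
    fix x
    assume "\<forall>n. x \<notin> {x. inverse (real (Suc n)) \<le> f x}"
    then have "\<not> 0 < f x"
      using reals_Archimedean[of "f x"] by (auto intro: less_imp_le)
    then show "ennreal (f x) = 0"
      by (simp add: ennreal_eq_0_iff)
  qed
  have "lint f = (\<integral>\<^sup>+x. 0 \<partial>lborel)"
    using nn_integral_cong_AE[OF AE0] unfolding lint_def by simp
  with assms show False
    by simp
qed

lemma superlevel_contains_ball:
  assumes "usc f" and "log_concave f" and "0 < lint f"
  shows "\<exists>x0 r t. 0 < r \<and> 0 < t \<and> ball x0 r \<subseteq> {x. t \<le> f x}"
proof -
  obtain t where t: "0 < t" and not_null: "{x. t \<le> f x} \<notin> null_sets lborel"
    using superlevel_not_null[OF assms(3)] by blast
  have "\<not> negligible {x. t \<le> f x}"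
    using not_null sets_superlevel_usc[OF assms(1), of t]
    by (simp add: negligible_iff_null_sets null_sets_completion_iff)
  then have "interior {x. t \<le> f x} \<noteq> {}"
    using negligible_convex_interior[OF convex_superlevel_log_concave[OF assms(2) t]] by simp
  then obtain x0 r where "0 < r" "ball x0 r \<subseteq> {x. t \<le> f x}"
    by (auto simp: mem_interior)
  then show ?thesis
    using t by blast
qed

lemma log_concave_midpoint_ball:
  assumes "log_concave g" and "\<And>x. 0 \<le> g x" and "0 < c" and "ball w \<rho> \<subseteq> {x. c \<le> g x}"
  shows "ball ((1/2) *\<^sub>R w + (1/2) *\<^sub>R y) (\<rho>/2) \<subseteq> {x. sqrt c * sqrt (g y) \<le> g x}"
proof
  fix x
  assume x: "x \<in> ball ((1/2) *\<^sub>R w + (1/2) *\<^sub>R y) (\<rho>/2)"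
  define w' where "w' = 2 *\<^sub>R x - y"
  have "w - w' = 2 *\<^sub>R ((1/2) *\<^sub>R w + (1/2) *\<^sub>R y - x)"
    unfolding w'_def by (simp add: algebra_simps)
  then have "w' \<in> ball w \<rho>"
    using x by (simp add: dist_norm)
  then have "c \<le> g w'"
    using assms(4) by auto
  moreover have "x = (1 - 1/2) *\<^sub>R w' + (1/2) *\<^sub>R y"
    unfolding w'_def by (simp add: algebra_simps)
  ultimately show "x \<in> {x. sqrt c * sqrt (g y) \<le> g x}"
    using log_concave_powr_le[OF assms(1), of c w' "g y" y "1/2"] assms(2,3)
    by (simp add: powr_half_sqrt)
qed

lemma log_concave_bounded:
  fixes g :: "real^'n \<Rightarrow> real"
  assumes "usc g" and "log_concave g" and "\<And>x. 0 \<le> g x" and "0 < lint g" and "lint g < \<infinity>"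
  shows "\<exists>M>0. \<forall>y. g y \<le> M"
proof -
  obtain w \<rho> c where \<rho>: "0 < \<rho>" and c: "0 < c" and ball: "ball w \<rho> \<subseteq> {x. c \<le> g x}"
    using superlevel_contains_ball[OF assms(1,2,4)] by blast
  define vol where "vol = unit_ball_vol (real DIM(real^'n)) * (\<rho>/2) ^ DIM(real^'n)"
  have vol: "0 < vol"
    unfolding vol_def using \<rho> by simp
  obtain L where L: "lint g = ennreal L" "0 \<le> L"
    using assms(5) by (cases "lint g") auto
  have bound: "g y \<le> (L / (vol * sqrt c))\<^sup>2" for y :: "real^'n"
  proof -
    have "ennreal (sqrt c * sqrt (g y)) * emeasure lborel (ball ((1/2) *\<^sub>R w + (1/2) *\<^sub>R y) (\<rho>/2)) \<le> lint g"
      using log_concave_midpoint_ball[OF assms(2,3) c ball] by (intro lint_ge_mult_emeasure) auto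
    moreover have "ennreal (sqrt c * sqrt (g y) * vol)
        = ennreal (sqrt c * sqrt (g y)) * emeasure lborel (ball ((1/2) *\<^sub>R w + (1/2) *\<^sub>R y) (\<rho>/2))"
      using \<rho> c vol assms(3)[of y] unfolding vol_def by (simp add: emeasure_ball ennreal_mult)
    ultimately have "ennreal (sqrt c * sqrt (g y) * vol) \<le> ennreal L"
      using L by simp
    then have "sqrt c * sqrt (g y) * vol \<le> L"
      using L by simp
    then have "sqrt (g y) \<le> L / (vol * sqrt c)"
      using vol c by (simp add: pos_le_divide_eq mult_ac)
    then show ?thesis
      using assms(3)[of y] real_sqrt_ge_zero power_mono by (metis real_sqrt_pow2)
  qed
  show ?thesis
  proof (intro exI conjI allI)
    show "0 < (L / (vol * sqrt c))\<^sup>2 + 1"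
      by (simp add: add_nonneg_pos)
    show "g y \<le> (L / (vol * sqrt c))\<^sup>2 + 1" for y
      using bound[of y] by simp
  qed
qed

text \<open>\<open>x\<close> lies on the segment from \<open>y0\<close> to \<open>k *\<^sub>R x + (1 - k) *\<^sub>R y0\<close>, at parameter \<open>1/k\<close>.\<close>

lemma log_concave_homothety_ge:
  assumes "log_concave g" and "0 < g y0" and "1 \<le> k" and "0 < u" and "ln (g y0 / u) \<le> k"
    and "u \<le> g (k *\<^sub>R x + (1 - k) *\<^sub>R y0)"
  shows "g y0 * exp (-1) \<le> g x"
proof -
  define v where "v = 1 / k"
  have v: "0 < v" "v \<le> 1" "v * k = 1"
    using assms(3) unfolding v_def by auto
  have "g y0 * exp (-1) = exp (ln (g y0) - v * k)"
    using assms(2) v(3) by (simp add: exp_diff exp_minus field_simps)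
  also have "\<dots> \<le> exp ((1 - v) * ln (g y0) + v * ln u)"
    using mult_left_mono[OF assms(5) less_imp_le[OF v(1)]] assms(2,4)
    by (simp add: ln_div algebra_simps)
  also have "\<dots> = g y0 powr (1 - v) * u powr v"
    using assms(2,4) by (simp add: powr_def exp_add)
  also have "\<dots> \<le> g x"
  proof (cases "v = 1")
    case True
    then show ?thesis
      using assms(4,6) v(3) by simp
  next
    case False
    have "g y0 powr (1 - v) * u powr v \<le> g ((1 - v) *\<^sub>R y0 + v *\<^sub>R (k *\<^sub>R x + (1 - k) *\<^sub>R y0))"
      using log_concave_powr_le[OF assms(1) _ order_refl _ assms(6), of y0 v] assms(2,4) v False
      by simp
    moreover have "(1 - v) *\<^sub>R y0 + v *\<^sub>R (k *\<^sub>R x + (1 - k) *\<^sub>R y0) = x"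
      using v(3) by (simp add: algebra_simps)
    ultimately show ?thesis
      by simp
  qed
  finally show ?thesis .
qed

lemma emeasure_superlevel_le:
  fixes g :: "real^'n \<Rightarrow> real"
  assumes "usc g" and "log_concave g" and "0 < g y0" and "1 \<le> k" and "0 < u"
    and "ln (g y0 / u) \<le> k"
  shows "emeasure lborel {x. u \<le> g x}
    \<le> ennreal (k ^ CARD('n)) * emeasure lborel {x. g y0 * exp (-1) \<le> g x}"
proof -
  define A :: "real^'n^'n" where "A = mat k"
  have A: "A *v x + (1 - k) *\<^sub>R y0 = k *\<^sub>R x + (1 - k) *\<^sub>R y0" for x
    unfolding A_def
    by (simp add: vec_eq_iff matrix_vector_mult_def mat_def if_distrib[of "\<lambda>a. a * b" for b] cong: if_cong)
  have det: "det A = k ^ CARD('n)"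
    unfolding A_def by (simp add: det_diagonal mat_def)
  have "{x. A *v x + (1 - k) *\<^sub>R y0 \<in> {x. u \<le> g x}} \<subseteq> {x. g y0 * exp (-1) \<le> g x}"
    using log_concave_homothety_ge[OF assms(2-6)] by (auto simp: A)
  moreover have "invertible A"
    using assms(4) by (simp add: invertible_det_nz det)
  ultimately show ?thesis
    using emeasure_affine_matrix[of A "{x. u \<le> g x}" "(1 - k) *\<^sub>R y0"] assms(4)
      sets_superlevel_usc[OF assms(1)]
    by (simp add: det emeasure_mono mult_left_mono)
qed

lemma ball_convex_combination_subset:
  fixes K :: "'a::real_normed_vector set"
  assumes "convex K" and "ball c r \<subseteq> K" and "p \<in> K" and "0 \<le> \<tau>" and "\<tau> < 1"
  shows "ball ((1 - \<tau>) *\<^sub>R c + \<tau> *\<^sub>R p) ((1 - \<tau>) * r) \<subseteq> K"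
proof
  fix z
  assume z: "z \<in> ball ((1 - \<tau>) *\<^sub>R c + \<tau> *\<^sub>R p) ((1 - \<tau>) * r)"
  define w where "w = (1 / (1 - \<tau>)) *\<^sub>R (z - \<tau> *\<^sub>R p)"
  have zw: "z = (1 - \<tau>) *\<^sub>R w + \<tau> *\<^sub>R p"
    using assms(5) by (simp add: w_def)
  then have "(1 - \<tau>) * dist c w < (1 - \<tau>) * r"
    using z assms(5) by (simp add: dist_norm scaleR_diff_right[symmetric])
  then have "w \<in> K"
    using assms(2,5) by auto
  then show "z \<in> K"
    using assms(1,3,4,5) zw unfolding convex_alt by auto
qed

lemma disjoint_family_balls_on_line:
  fixes u :: "'a::real_normed_vector"
  assumes "norm u = 1" and "0 < \<delta>"
  shows "disjoint_family_on (\<lambda>k::nat. ball (c + (real k * \<delta>) *\<^sub>R u) (\<delta>/2)) I"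
  unfolding disjoint_family_on_def
proof (intro ballI impI equals0I)
  fix k j :: nat and z
  assume "k \<noteq> j" and z: "z \<in> ball (c + (real k * \<delta>) *\<^sub>R u) (\<delta>/2) \<inter> ball (c + (real j * \<delta>) *\<^sub>R u) (\<delta>/2)"
  have "\<delta> \<le> \<bar>real k - real j\<bar> * \<delta>"
    using \<open>k \<noteq> j\<close> assms(2) by (simp add: mult_le_cancel_right1)
  also have "\<dots> = dist (c + (real k * \<delta>) *\<^sub>R u) (c + (real j * \<delta>) *\<^sub>R u)"
    using assms by (simp add: dist_norm scaleR_diff_left[symmetric] left_diff_distrib[symmetric] abs_mult)
  finally show False
    using z dist_triangle2[of "c + (real k * \<delta>) *\<^sub>R u" "c + (real j * \<delta>) *\<^sub>R u" z] by simp
qed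

text \<open>Along the segment from \<open>c\<close> to \<open>p\<close>, \<open>K\<close> contains about \<open>norm (p - c) / (2 * r)\<close> disjoint balls
  of radius \<open>r/2\<close>.\<close>

lemma convex_norm_le_of_emeasure:
  fixes K :: "(real^'n) set" and r m :: real
  defines "vol \<equiv> unit_ball_vol (real CARD('n)) * (r/2) ^ CARD('n)"
  assumes "convex K" and "K \<in> sets borel" and "ball c r \<subseteq> K" and "0 < r"
    and "emeasure lborel K \<le> ennreal m" and "0 \<le> m" and "p \<in> K"
  shows "norm (p - c) \<le> 2 * r * m / vol"
proof -
  have vol: "0 < vol"
    unfolding vol_def using assms(5) by simp
  define D where "D = norm (p - c)"
  show ?thesis
  proof (cases "D = 0")
    case True
    then show ?thesis
      using vol assms(5,7) unfolding D_def by simp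
  next
    case False
    then have D: "0 < D"
      unfolding D_def by simp
    define N where "N = nat \<lfloor>D / (2 * r)\<rfloor>"
    have N: "real N \<le> D / (2 * r)" "D / (2 * r) < real N + 1"
      unfolding N_def using D assms(5) by (simp_all add: of_nat_nat)
    define u where "u = (1 / D) *\<^sub>R (p - c)"
    define ctr where "ctr k = c + (real k * r) *\<^sub>R u" for k :: nat
    have inK: "ball (ctr k) (r/2) \<subseteq> K" if "k \<le> N" for k
    proof -
      have "real k \<le> D / (2 * r)"
        using that N(1) by linarith
      then have \<tau>: "real k * r / D \<le> 1/2"
        using D assms(5) by (simp add: field_simps)
      have "1/2 * r \<le> (1 - real k * r / D) * r"
        using \<tau> assms(5) by (intro mult_right_mono) auto
      then have "ball (ctr k) (r/2) \<subseteq> ball (ctr k) ((1 - real k * r / D) * r)"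
        by (intro subset_ball) simp
      also have "\<dots> \<subseteq> K"
        using ball_convex_combination_subset[OF assms(2,4,8), of "real k * r / D"] \<tau> D assms(5)
        by (simp add: ctr_def u_def algebra_simps)
      finally show ?thesis .
    qed
    have "norm u = 1"
      using D unfolding u_def D_def by simp
    then have "disjoint_family_on (\<lambda>k. ball (ctr k) (r/2)) {0..N}"
      unfolding ctr_def using assms(5) by (rule disjoint_family_balls_on_line)
    then have "(\<Sum>k\<in>{0..N}. emeasure lborel (ball (ctr k) (r/2)))
        = emeasure lborel (\<Union>k\<in>{0..N}. ball (ctr k) (r/2))"
      by (intro sum_emeasure) auto
    also have "\<dots> \<le> emeasure lborel K"
      using inK assms(3) by (intro emeasure_mono UN_least) auto
    also have "\<dots> \<le> ennreal m"
      by (rule assms(6))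
    finally have "ennreal (real (Suc N) * vol) \<le> ennreal m"
      using assms(5) by (simp add: emeasure_ball vol_def ennreal_of_nat_eq_real_of_nat ennreal_mult')
    then have "real (Suc N) * vol \<le> m"
      using assms(7) by simp
    then have "real N + 1 \<le> m / vol"
      using vol by (simp add: field_simps)
    then have "D / (2 * r) < m / vol"
      using N(2) by linarith
    then show ?thesis
      using vol assms(5) unfolding D_def by (simp add: field_simps)
  qed
qed

lemma ln_power_le_powr:
  assumes "1 \<le> x" and "0 < \<epsilon>"
  shows "ln x ^ d \<le> x powr (real d * \<epsilon>) / \<epsilon> ^ d"
proof -
  have "ln x ^ d \<le> (x powr \<epsilon> / \<epsilon>) ^ d"
    using assms by (intro power_mono ln_powr_bound) auto
  also have "\<dots> = x powr (real d * \<epsilon>) / \<epsilon> ^ d"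
    using assms(1) by (simp add: power_divide powr_power)
  finally show ?thesis .
qed

lemma powr_le_ln_power_bounded:
  fixes s c V m :: real and d :: nat
  assumes "0 < s" and "0 < c" and "0 < V" and "0 \<le> m"
  shows "\<exists>\<alpha>1. \<forall>\<alpha>>0. \<alpha> powr s * V \<le> (max 1 (ln (c * \<alpha>))) ^ d * m \<longrightarrow> \<alpha> \<le> \<alpha>1"
proof -
  define \<epsilon> where "\<epsilon> = s / (2 * max 1 (real d))"
  have \<epsilon>: "0 < \<epsilon>" "real d * \<epsilon> \<le> s / 2"
    unfolding \<epsilon>_def using assms(1) by (auto simp: field_simps)
  define C where "C = c powr (s/2) * m / (\<epsilon> ^ d * V)"
  show ?thesis
  proof (intro exI[of _ "max (exp 1 / c) (C powr (2/s))"] allI impI)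
    fix \<alpha> :: real
    assume \<alpha>: "0 < \<alpha>" and le: "\<alpha> powr s * V \<le> (max 1 (ln (c * \<alpha>))) ^ d * m"
    show "\<alpha> \<le> max (exp 1 / c) (C powr (2/s))"
    proof (cases "ln (c * \<alpha>) \<le> 1")
      case True
      have "c * \<alpha> = exp (ln (c * \<alpha>))"
        using assms(2) \<alpha> by simp
      also have "\<dots> \<le> exp 1"
        using True by simp
      finally have "\<alpha> \<le> exp 1 / c"
        using assms(2) by (simp add: field_simps)
      then show ?thesis
        by simp
    next
      case False
      then have "0 < ln (c * \<alpha>)"
        by simp
      then have c\<alpha>: "1 \<le> c * \<alpha>"
        using ln_gt_zero_iff[of "c * \<alpha>"] assms(2) \<alpha> by simp
      have "ln (c * \<alpha>) ^ d \<le> (c * \<alpha>) powr (real d * \<epsilon>) / \<epsilon> ^ d"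
        by (rule ln_power_le_powr[OF c\<alpha> \<epsilon>(1)])
      also have "\<dots> \<le> (c * \<alpha>) powr (s/2) / \<epsilon> ^ d"
        using c\<alpha> \<epsilon> by (intro divide_right_mono powr_mono) auto
      finally have ln_le: "ln (c * \<alpha>) ^ d \<le> (c * \<alpha>) powr (s/2) / \<epsilon> ^ d" .
      have "\<alpha> powr (s/2) * (\<alpha> powr (s/2) * V) = \<alpha> powr s * V"
        by (simp add: powr_add[symmetric])
      also have "\<dots> \<le> ln (c * \<alpha>) ^ d * m"
        using le False by simp
      also have "\<dots> \<le> (c * \<alpha>) powr (s/2) / \<epsilon> ^ d * m"
        by (rule mult_right_mono[OF ln_le assms(4)])
      also have "\<dots> = \<alpha> powr (s/2) * (c powr (s/2) * m / \<epsilon> ^ d)"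
        using assms(2) \<alpha> by (simp add: powr_mult)
      finally have "\<alpha> powr (s/2) * V \<le> c powr (s/2) * m / \<epsilon> ^ d"
        using \<alpha> by (subst (asm) mult_le_cancel_left_pos) simp_all
      then have "\<alpha> powr (s/2) \<le> C"
        using \<alpha> \<epsilon> assms(3) unfolding C_def by (simp add: field_simps)
      then have "(\<alpha> powr (s/2)) powr (2/s) \<le> C powr (2/s)"
        using assms(1) by (intro powr_mono2) auto
      then show ?thesis
        using \<alpha> assms(1) by (simp add: powr_powr)
    qed
  qed
qed

lemma norm_matrix_le_columns:
  fixes A :: "real^'n^'n"
  assumes "\<And>j. norm (A *v axis j 1) \<le> B"
  shows "norm A \<le> real CARD('n) * real CARD('n) * B"
    and "norm (A *v x) \<le> real CARD('n) * real CARD('n) * B * norm x"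
proof -
  have entry: "\<bar>A $ i $ j\<bar> \<le> B" for i j
    using component_le_norm_cart[of "A *v axis j 1" i] assms[of j]
    by (simp add: matrix_vector_mult_basis column_def)
  have "norm A \<le> (\<Sum>i\<in>UNIV. norm (A $ i))"
    by (simp add: norm_vec_def L2_set_le_sum)
  also have "\<dots> \<le> (\<Sum>i\<in>UNIV. \<Sum>j\<in>UNIV. \<bar>A $ i $ j\<bar>)"
    by (intro sum_mono norm_le_l1_cart)
  also have "\<dots> \<le> (\<Sum>i\<in>(UNIV::'n set). \<Sum>j\<in>(UNIV::'n set). B)"
    by (intro sum_mono entry)
  also have "\<dots> = real CARD('n) * real CARD('n) * B"
    by simp
  finally show "norm A \<le> real CARD('n) * real CARD('n) * B" .
  have "norm (A *v x) \<le> onorm ((*v) A) * norm x"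
    by (rule onorm) simp
  also have "\<dots> \<le> real CARD('n) * real CARD('n) * B * norm x"
    by (intro mult_right_mono onorm_le_matrix_component entry) simp
  finally show "norm (A *v x) \<le> real CARD('n) * real CARD('n) * B * norm x" .
qed

lemma affine_bounded_on_ball:
  fixes A :: "real^'n^'n" and r R :: real
  defines "B \<equiv> real CARD('n) * real CARD('n) * (4 * R / r)"
  assumes "0 < r" and "\<And>x. x \<in> ball x0 r \<Longrightarrow> norm (A *v x + a - x0) \<le> R"
  shows "norm A \<le> B" and "norm a \<le> R + norm x0 + B * norm x0"
proof -
  have centre: "norm (A *v x0 + a - x0) \<le> R"
    using assms(2,3) by simp
  have "norm (A *v axis j 1) \<le> 4 * R / r" for j
  proof -
    define v where "v = x0 + (r/2) *\<^sub>R axis j (1::real)"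
    have "v \<in> ball x0 r"
      using assms(2) by (simp add: v_def dist_norm)
    have "(r/2) * norm (A *v axis j 1) = norm ((A *v v + a - x0) - (A *v x0 + a - x0))"
      using assms(2) by (simp add: v_def matrix_vector_right_distrib matrix_vector_mult_scaleR)
    also have "\<dots> \<le> norm (A *v v + a - x0) + norm (A *v x0 + a - x0)"
      by (rule norm_triangle_ineq4)
    also have "\<dots> \<le> 2 * R"
      using assms(3)[OF \<open>v \<in> ball x0 r\<close>] centre by simp
    finally show ?thesis
      using assms(2) by (simp add: field_simps)
  qed
  note columns = norm_matrix_le_columns[OF this, folded B_def]
  then show "norm A \<le> B"
    by simp
  have "norm a = norm ((A *v x0 + a - x0) + (x0 - A *v x0))"
    by (simp add: algebra_simps)
  also have "\<dots> \<le> norm (A *v x0 + a - x0) + norm x0 + norm (A *v x0)"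
    using norm_triangle_ineq[of "A *v x0 + a - x0" "x0 - A *v x0"] norm_triangle_ineq4[of x0 "A *v x0"]
    by linarith
  finally show "norm a \<le> R + norm x0 + B * norm x0"
    using centre columns(2)[of x0] by linarith
qed

definition above_position :: "(real^'n \<Rightarrow> real) \<Rightarrow> (real^'n \<Rightarrow> real) \<Rightarrow> real^'n^'n \<Rightarrow> real \<Rightarrow> real^'n \<Rightarrow> bool"
  where "above_position f g A \<alpha> a \<longleftrightarrow> (\<forall>x. f x \<le> \<alpha> * g (A *v x + a))"

definition position_cost :: "real \<Rightarrow> real^'n^'n \<Rightarrow> real \<Rightarrow> real"
  where "position_cost s A \<alpha> = \<alpha> powr s / \<bar>det A\<bar>"

lemma lint_powr_position:
  fixes g :: "real^'n \<Rightarrow> real"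
  assumes "usc g" and "\<And>x. 0 \<le> g x" and "invertible A" and "0 < \<alpha>"
  shows "lint (\<lambda>x. (\<alpha> * g (A *v x + a)) powr s) = ennreal (position_cost s A \<alpha>) * lint (\<lambda>x. g x powr s)"
proof -
  have [measurable]: "g \<in> borel_measurable borel"
    using assms(1) by (rule usc_borel_measurable)
  have [measurable]: "(\<lambda>x. A *v x + a) \<in> borel \<rightarrow>\<^sub>M borel"
    by (intro borel_measurable_continuous_onI continuous_intros)
  have det: "det A \<noteq> 0"
    using assms(3) by (simp add: invertible_det_nz)
  have "lint (\<lambda>x. (\<alpha> * g (A *v x + a)) powr s)
      = (\<integral>\<^sup>+x. ennreal (\<alpha> powr s) * ennreal (g (A *v x + a) powr s) \<partial>lborel)"
    unfolding lint_def using assms(2,4) by (intro nn_integral_cong) (simp add: powr_mult ennreal_mult')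
  also have "\<dots> = ennreal (\<alpha> powr s) * (\<integral>\<^sup>+x. ennreal (g (A *v x + a) powr s) \<partial>lborel)"
    by (rule nn_integral_cmult) measurable
  also have "ennreal (\<alpha> powr s) = ennreal (position_cost s A \<alpha>) * ennreal \<bar>det A\<bar>"
    using det by (simp add: position_cost_def ennreal_mult'[symmetric])
  finally show ?thesis
    using nn_integral_affine_matrix[OF assms(3), of "\<lambda>x. ennreal (g x powr s)" a]
    by (simp add: lint_def mult.assoc)
qed

lemma above_position_superlevel:
  assumes "above_position f g A \<alpha> a" and "0 < \<alpha>" and "t \<le> f x"
  shows "t / \<alpha> \<le> g (A *v x + a)"
proof -
  have "t \<le> \<alpha> * g (A *v x + a)"
    using assms(1,3) unfolding above_position_def by (blast intro: order_trans)
  then show ?thesis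
    using assms(2) by (simp add: divide_le_eq mult.commute)
qed

lemma position_scale_lower_bound:
  assumes "above_position f g A \<alpha> a" and "0 < \<alpha>" and "t \<le> f x0" and "\<forall>y. g y \<le> M" and "0 < M"
  shows "t / M \<le> \<alpha>"
  using above_position_superlevel[OF assms(1-3)] assms(2,4,5)
  by (metis divide_le_eq mult.commute order_trans pos_divide_le_eq)

text \<open>The position maps \<open>ball x0 r\<close>, where \<open>f \<ge> t\<close>, into \<open>{x. t / \<alpha> \<le> g x}\<close>; comparing volumes through
  \<open>emeasure_superlevel_le\<close> gives \<open>\<alpha> powr s * vol \<le> (max 1 (ln (g x0 / t * \<alpha>))) ^ d * m\<close>.\<close>

lemma position_scale_upper_bound:
  fixes f g :: "real^'n \<Rightarrow> real"
  assumes "0 < s" and "usc g" and "log_concave g" and "lint g < \<infinity>"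
    and "0 < r" and "0 < t" and "ball x0 r \<subseteq> {x. t \<le> f x}" and "0 < g x0"
  shows "\<exists>\<alpha>1\<ge>1. \<forall>A \<alpha> a. invertible A \<longrightarrow> 0 < \<alpha> \<longrightarrow> above_position f g A \<alpha> a \<longrightarrow>
    \<alpha> powr s \<le> \<bar>det A\<bar> \<longrightarrow> \<alpha> \<le> \<alpha>1"
proof -
  define L where "L = {x. g x0 * exp (-1) \<le> g x}"
  obtain m where m: "emeasure lborel L = ennreal m" "0 \<le> m"
    using emeasure_superlevel_finite[OF assms(2,4), of "g x0 * exp (-1)"] assms(8)
    unfolding L_def by (cases "emeasure lborel L") (auto simp: L_def)
  define vol where "vol = unit_ball_vol (real CARD('n)) * r ^ CARD('n)"
  have vol: "0 < vol" "emeasure lborel (ball x0 r) = ennreal vol"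
    unfolding vol_def using assms(5) by (simp_all add: emeasure_ball)
  obtain \<alpha>1 where \<alpha>1: "\<And>\<alpha>. 0 < \<alpha> \<Longrightarrow> \<alpha> powr s * vol \<le> (max 1 (ln (g x0 / t * \<alpha>))) ^ CARD('n) * m \<Longrightarrow> \<alpha> \<le> \<alpha>1"
    using powr_le_ln_power_bounded[OF assms(1) _ vol(1) m(2), of "g x0 / t" "CARD('n)"] assms(6,8) by auto
  show ?thesis
  proof (intro exI[of _ "max 1 \<alpha>1"] conjI allI impI)
    fix A \<alpha> a
    assume inv: "invertible A" and \<alpha>: "0 < \<alpha>" and above: "above_position f g A \<alpha> a"
      and det: "\<alpha> powr s \<le> \<bar>det A\<bar>"
    define k where "k = max 1 (ln (g x0 / t * \<alpha>))"
    have "ball x0 r \<subseteq> {x. A *v x + a \<in> {x. t / \<alpha> \<le> g x}}"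
      using above_position_superlevel[OF above \<alpha>] assms(7) by auto
    then have "ennreal \<bar>det A\<bar> * emeasure lborel (ball x0 r) \<le> emeasure lborel {x. t / \<alpha> \<le> g x}"
      by (rule det_mult_emeasure_le[OF inv sets_superlevel_usc[OF assms(2)]])
    also have "\<dots> \<le> ennreal (k ^ CARD('n)) * emeasure lborel L"
      unfolding L_def k_def using assms(6,8) \<alpha>
      by (intro emeasure_superlevel_le[OF assms(2,3,8)]) (simp_all add: field_simps)
    finally have "\<bar>det A\<bar> * vol \<le> k ^ CARD('n) * m"
      using vol m unfolding k_def by (simp add: ennreal_mult'[symmetric])
    then have "\<alpha> powr s * vol \<le> k ^ CARD('n) * m"
      using mult_right_mono[OF det less_imp_le[OF vol(1)]] by linarith
    then show "\<alpha> \<le> max 1 \<alpha>1"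
      using \<alpha>1[OF \<alpha>] unfolding k_def by simp
  qed simp
qed

lemma position_affine_part_bounded:
  fixes f g :: "real^'n \<Rightarrow> real"
  assumes "usc g" and "log_concave g" and "lint g < \<infinity>" and "\<forall>x. f x \<le> g x"
    and "0 < r" and "0 < t" and "ball x0 r \<subseteq> {x. t \<le> f x}" and "1 \<le> \<alpha>1"
  shows "\<exists>RA Ra. \<forall>A \<alpha> a. 0 < \<alpha> \<longrightarrow> \<alpha> \<le> \<alpha>1 \<longrightarrow> above_position f g A \<alpha> a \<longrightarrow> norm A \<le> RA \<and> norm a \<le> Ra"
proof -
  define K where "K = {x. t / \<alpha>1 \<le> g x}"
  have tK: "0 < t / \<alpha>1" "t / \<alpha>1 \<le> t"
    using assms(6,8) by (auto simp: divide_le_eq)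
  obtain m where m: "emeasure lborel K = ennreal m" "0 \<le> m"
    using emeasure_superlevel_finite[OF assms(1,3) tK(1)] unfolding K_def
    by (cases "emeasure lborel {x. t / \<alpha>1 \<le> g x}") auto
  have "ball x0 r \<subseteq> K"
    using assms(4,7) tK(2) unfolding K_def by (force intro: order_trans)
  define R where "R = 2 * r * m / (unit_ball_vol (real CARD('n)) * (r/2) ^ CARD('n))"
  have K_bounded: "norm (p - x0) \<le> R" if "p \<in> K" for p
    unfolding R_def using K_def convex_superlevel_log_concave[OF assms(2) tK(1)]
      sets_superlevel_usc[OF assms(1)] \<open>ball x0 r \<subseteq> K\<close> assms(5) m that
    by (intro convex_norm_le_of_emeasure) auto
  define B where "B = real CARD('n) * real CARD('n) * (4 * R / r)"
  show ?thesis
  proof (intro exI allI impI)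
    fix A \<alpha> a
    assume \<alpha>: "0 < \<alpha>" "\<alpha> \<le> \<alpha>1" and above: "above_position f g A \<alpha> a"
    have "A *v x + a \<in> K" if "x \<in> ball x0 r" for x
    proof -
      have "t / \<alpha>1 \<le> t / \<alpha>"
        using assms(6) \<alpha> by (simp add: frac_le)
      also have "\<dots> \<le> g (A *v x + a)"
        using above_position_superlevel[OF above \<alpha>(1)] assms(7) that by blast
      finally show ?thesis
        unfolding K_def by simp
    qed
    then have "\<And>x. x \<in> ball x0 r \<Longrightarrow> norm (A *v x + a - x0) \<le> R"
      using K_bounded by blast
    from affine_bounded_on_ball[OF assms(5) this, folded B_def]
    show "norm A \<le> B \<and> norm a \<le> R + norm x0 + B * norm x0"
      by simp
  qed
qed

lemma position_parameters_bounded: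
  fixes f g :: "real^'n \<Rightarrow> real"
  assumes "0 < s" and "proper_fun f" and "proper_fun g" and "log_concave f" and "log_concave g"
    and "\<forall>x. 0 \<le> g x" and "\<forall>x. f x \<le> g x"
  shows "\<exists>\<alpha>0 \<alpha>1 \<delta> RA Ra. 0 < \<alpha>0 \<and> 0 < \<delta> \<and>
    (\<forall>A \<alpha> a. invertible A \<longrightarrow> 0 < \<alpha> \<longrightarrow> above_position f g A \<alpha> a \<longrightarrow> position_cost s A \<alpha> \<le> 1 \<longrightarrow>
      \<alpha>0 \<le> \<alpha> \<and> \<alpha> \<le> \<alpha>1 \<and> \<delta> \<le> \<bar>det A\<bar> \<and> norm A \<le> RA \<and> norm a \<le> Ra)"
proof -
  have uf: "usc f" "0 < lint f" and ug: "usc g" "0 < lint g" "lint g < \<infinity>"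
    using assms(2,3) unfolding proper_fun_def by auto
  obtain x0 r t where r: "0 < r" and t: "0 < t" and ball: "ball x0 r \<subseteq> {x. t \<le> f x}"
    using superlevel_contains_ball[OF uf(1) assms(4) uf(2)] by blast
  obtain M where M: "0 < M" "\<forall>y. g y \<le> M"
    using log_concave_bounded[OF ug(1) assms(5) _ ug(2,3)] assms(6) by blast
  have fx0: "t \<le> f x0"
    using ball centre_in_ball[of x0 r] r by blast
  then have gx0: "0 < g x0"
    using t assms(7) by (meson less_le_trans)
  obtain \<alpha>1 where \<alpha>1: "1 \<le> \<alpha>1" and \<alpha>_le: "\<And>A \<alpha> a. invertible A \<Longrightarrow> 0 < \<alpha> \<Longrightarrow> above_position f g A \<alpha> a
      \<Longrightarrow> \<alpha> powr s \<le> \<bar>det A\<bar> \<Longrightarrow> \<alpha> \<le> \<alpha>1"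
    using position_scale_upper_bound[OF assms(1) ug(1) assms(5) ug(3) r t ball gx0] by blast
  obtain RA Ra where affine: "\<And>A \<alpha> a. 0 < \<alpha> \<Longrightarrow> \<alpha> \<le> \<alpha>1 \<Longrightarrow> above_position f g A \<alpha> a
      \<Longrightarrow> norm A \<le> RA \<and> norm a \<le> Ra"
    using position_affine_part_bounded[OF ug(1) assms(5) ug(3) assms(7) r t ball \<alpha>1] by blast
  show ?thesis
  proof (intro exI conjI allI impI)
    fix A \<alpha> a
    assume inv: "invertible A" and \<alpha>: "0 < \<alpha>" and above: "above_position f g A \<alpha> a"
      and "position_cost s A \<alpha> \<le> 1"
    then have det: "\<alpha> powr s \<le> \<bar>det A\<bar>"
      by (simp add: position_cost_def invertible_det_nz divide_le_eq)
    show \<alpha>0: "t / M \<le> \<alpha>"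
      by (rule position_scale_lower_bound[OF above \<alpha> fx0 M(2,1)])
    show "\<alpha> \<le> \<alpha>1"
      by (rule \<alpha>_le[OF inv \<alpha> above det])
    then show "norm A \<le> RA" "norm a \<le> Ra"
      using affine[OF \<alpha> _ above] by simp_all
    show "(t / M) powr s \<le> \<bar>det A\<bar>"
      using powr_mono2[OF less_imp_le[OF assms(1)] _ \<alpha>0] t M(1) det by simp
  qed (use t M(1) assms(1) in simp_all)
qed

lemma open_usc_less:
  fixes g :: "real^'n \<Rightarrow> real" and Y :: "'a::topological_space \<Rightarrow> real^'n"
  assumes "usc g" and "continuous_on UNIV Y" and "continuous_on UNIV h"
  shows "open {p. g (Y p) < h p}"
proof -
  have "{p. g (Y p) < h p} = (\<Union>t. {p. g (Y p) < t} \<inter> {p. t < h p})"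
    by (auto dest: dense)
  moreover have "open {p. g (Y p) < t}" for t
    using open_vimage[OF _ assms(2), of "{y. g y < t}"] assms(1) unfolding usc_def vimage_def by simp
  moreover have "open {p. t < h p}" for t
    using assms(3) by (intro open_Collect_less continuous_on_const)
  ultimately show ?thesis
    by (auto intro!: open_UN open_Int)
qed

lemma closed_scaled_superlevel_usc:
  fixes g :: "real^'n \<Rightarrow> real" and Y :: "'a::topological_space \<Rightarrow> real^'n"
  assumes "usc g" and "0 < \<alpha>0" and "continuous_on UNIV \<alpha>" and "continuous_on UNIV Y"
  shows "closed {p. \<alpha>0 \<le> \<alpha> p \<and> F \<le> \<alpha> p * g (Y p)}"
proof -
  have "- {p. \<alpha>0 \<le> \<alpha> p \<and> F \<le> \<alpha> p * g (Y p)} = {p. \<alpha> p < \<alpha>0} \<union> {p. g (Y p) < F / max \<alpha>0 (\<alpha> p)}"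
    using assms(2) by (auto simp: not_le max_def pos_less_divide_eq mult.commute split: if_splits)
  moreover have "open {p. g (Y p) < F / max \<alpha>0 (\<alpha> p)}"
    using assms by (intro open_usc_less continuous_intros) auto
  ultimately show ?thesis
    unfolding closed_def using assms(3) by (auto intro!: open_Un open_Collect_less)
qed

definition psd_mat :: "real^'n^'n \<Rightarrow> bool"
  where "psd_mat A \<longleftrightarrow> transpose A = A \<and> (\<forall>x. 0 \<le> x \<bullet> (A *v x))"

lemma closed_psd_mat: "closed (Collect psd_mat)"
  unfolding psd_mat_def transpose_def matrix_vector_mult_def
  by (intro closed_Collect_conj closed_Collect_all closed_Collect_le closed_Collect_eq continuous_intros)

text \<open>For positive semidefinite \<open>A\<close> with \<open>x \<bullet> (A *v x) = 0\<close> and \<open>y = A *v x\<close>, the quadratic form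
  at \<open>x - t *\<^sub>R y\<close> equals \<open>t * (t * (y \<bullet> (A *v y)) - 2 * (y \<bullet> y))\<close>, negative for small \<open>t > 0\<close>
  unless \<open>y = 0\<close>.\<close>

lemma psd_mat_quadratic_zero:
  assumes "psd_mat A" and "x \<bullet> (A *v x) = 0"
  shows "A *v x = 0"
proof (rule ccontr)
  define y where "y = A *v x"
  define q where "q = y \<bullet> (A *v y)"
  assume "A *v x \<noteq> 0"
  then have yy: "0 < y \<bullet> y"
    by (simp add: y_def)
  have q: "0 \<le> q"
    using assms(1) unfolding q_def psd_mat_def by blast
  define t where "t = (y \<bullet> y) / (q + 1)"
  have t: "0 < t" "t * q \<le> y \<bullet> y"
    using yy q by (auto simp: t_def field_simps)
  have "x \<bullet> (A *v y) = y \<bullet> y"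
    using assms(1) unfolding psd_mat_def y_def
    by (metis dot_lmul_matrix inner_commute transpose_matrix_vector)
  then have "(x - t *\<^sub>R y) \<bullet> (A *v (x - t *\<^sub>R y)) = t * (t * q - 2 * (y \<bullet> y))"
    using assms(2) unfolding q_def y_def
    by (simp add: algebra_simps inner_diff_left inner_diff_right matrix_vector_mult_diff_distrib
        matrix_vector_mult_scaleR)
  also have "\<dots> < 0"
    using t yy by (intro mult_pos_neg) linarith+
  finally show False
    using assms(1) unfolding psd_mat_def by (metis not_le)
qed

lemma pos_def_mat_iff_psd_invertible: "pos_def_mat A \<longleftrightarrow> psd_mat A \<and> invertible A"
proof
  assume pd: "pos_def_mat A"
  have "0 \<le> x \<bullet> (A *v x)" for x
    using pd unfolding pos_def_mat_def by (cases "x = 0") (auto intro: less_imp_le)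
  then have "psd_mat A"
    using pd unfolding pos_def_mat_def psd_mat_def by blast
  moreover have "inj ((*v) A)"
  proof (rule injI)
    fix x y
    assume "A *v x = A *v y"
    then have "(x - y) \<bullet> (A *v (x - y)) = 0"
      by (simp add: matrix_vector_mult_diff_distrib)
    then have "\<not> x - y \<noteq> 0"
      using pd unfolding pos_def_mat_def by (metis less_irrefl)
    then show "x = y"
      by simp
  qed
  ultimately show "psd_mat A \<and> invertible A"
    using det_nz_iff_inj[of "(*v) A"] by (simp add: invertible_det_nz)
next
  assume "psd_mat A \<and> invertible A"
  then have psd: "psd_mat A" and inj: "inj ((*v) A)"
    using det_nz_iff_inj[of "(*v) A"] by (auto simp: invertible_det_nz)
  have "0 < x \<bullet> (A *v x)" if "x \<noteq> 0" for x
  proof -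
    have "A *v x \<noteq> A *v 0"
      using inj that by (metis injD)
    then have "x \<bullet> (A *v x) \<noteq> 0"
      using psd_mat_quadratic_zero[OF psd] by auto
    then show ?thesis
      using psd unfolding psd_mat_def by (simp add: order_less_le)
  qed
  then show "pos_def_mat A"
    using psd unfolding pos_def_mat_def psd_mat_def by blast
qed

lemma position_cost_attains_min:
  fixes f g :: "real^'n \<Rightarrow> real" and C :: "(real^'n^'n) set"
  assumes "0 < s" and "proper_fun f" and "proper_fun g" and "log_concave f" and "log_concave g"
    and "\<forall>x. 0 \<le> g x" and "\<forall>x. f x \<le> g x" and "closed C" and "mat 1 \<in> C"
  shows "\<exists>A \<alpha> a. A \<in> C \<and> invertible A \<and> 0 < \<alpha> \<and> above_position f g A \<alpha> a \<and>
    (\<forall>A' \<alpha>' a'. A' \<in> C \<longrightarrow> invertible A' \<longrightarrow> 0 < \<alpha>' \<longrightarrow> above_position f g A' \<alpha>' a' \<longrightarrow>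
       position_cost s A \<alpha> \<le> position_cost s A' \<alpha>')"
proof -
  have ug: "usc g"
    using assms(3) unfolding proper_fun_def by blast
  obtain \<alpha>0 \<alpha>1 \<delta> RA Ra where \<alpha>0: "0 < \<alpha>0" and \<delta>: "0 < \<delta>"
    and bounds: "\<And>A \<alpha> a. invertible A \<Longrightarrow> 0 < \<alpha> \<Longrightarrow> above_position f g A \<alpha> a \<Longrightarrow> position_cost s A \<alpha> \<le> 1
      \<Longrightarrow> \<alpha>0 \<le> \<alpha> \<and> \<alpha> \<le> \<alpha>1 \<and> \<delta> \<le> \<bar>det A\<bar> \<and> norm A \<le> RA \<and> norm a \<le> Ra"
    using position_parameters_bounded[OF assms(1-7)] by blast
  define S where "S = (cball 0 RA \<times> {\<alpha>0..\<alpha>1} \<times> cball 0 Ra) \<inter> {p. \<delta> \<le> \<bar>det (fst p)\<bar>} \<inter> (C \<times> UNIV)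
    \<inter> (\<Inter>x. {p. \<alpha>0 \<le> fst (snd p) \<and> f x \<le> fst (snd p) * g (fst p *v x + snd (snd p))})"
  have S: "(A, \<alpha>, a) \<in> S \<longleftrightarrow> norm A \<le> RA \<and> \<alpha>0 \<le> \<alpha> \<and> \<alpha> \<le> \<alpha>1 \<and> norm a \<le> Ra \<and> \<delta> \<le> \<bar>det A\<bar> \<and> A \<in> C
      \<and> above_position f g A \<alpha> a" for A \<alpha> a
    unfolding S_def above_position_def by auto
  have "compact S"
    unfolding S_def
    by (intro compact_Int_closed compact_Times compact_cball compact_Icc closed_Int closed_Times
        closed_INT ballI closed_scaled_superlevel_usc[OF ug \<alpha>0] assms(8) closed_UNIV)
      (auto simp: det_def matrix_vector_mult_def intro!: closed_Collect_le continuous_intros)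
  have invertible_of_S: "invertible A" if "(A, \<alpha>, a) \<in> S" for A \<alpha> a
    using that \<delta> by (auto simp: S invertible_det_nz)
  have "(mat 1, 1, 0) \<in> S"
    using bounds[of "mat 1" 1 0] assms(7,9)
    by (simp add: S above_position_def position_cost_def invertible_det_nz)
  moreover have "continuous_on S (\<lambda>p. position_cost s (fst p) (fst (snd p)))"
    using \<alpha>0 \<delta> unfolding position_cost_def S_def det_def
    by (intro continuous_intros) auto
  ultimately obtain p where "p \<in> S" and min: "\<And>q. q \<in> S \<Longrightarrow>
      position_cost s (fst p) (fst (snd p)) \<le> position_cost s (fst q) (fst (snd q))"
    using continuous_attains_inf[OF \<open>compact S\<close>] by blast
  obtain A \<alpha> a where p: "p = (A, \<alpha>, a)"
    by (cases p) auto
  have cost_le_1: "position_cost s A \<alpha> \<le> 1"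
    using min[OF \<open>(mat 1, 1, 0) \<in> S\<close>] by (simp add: p position_cost_def)
  show ?thesis
  proof (intro exI conjI allI impI)
    show "A \<in> C" "invertible A" "0 < \<alpha>" "above_position f g A \<alpha> a"
      using \<open>p \<in> S\<close> invertible_of_S \<alpha>0 by (auto simp: p S)
    fix A' \<alpha>' a'
    assume "A' \<in> C" "invertible A'" "0 < \<alpha>'" "above_position f g A' \<alpha>' a'"
    then show "position_cost s A \<alpha> \<le> position_cost s A' \<alpha>'"
      using bounds[of A' \<alpha>' a'] min[of "(A', \<alpha>', a')"] cost_le_1 by (force simp: p S)
  qed
qed

lemma solves_loewner_if_min_cost:
  fixes g :: "real^'n \<Rightarrow> real"
  assumes "usc g" and "\<forall>x. 0 \<le> g x"
    and P: "P = {(\<lambda>x. \<alpha> * g (A *v x + a)) | A \<alpha> a. Q A \<and> \<alpha> > 0}" and "\<And>A. Q A \<Longrightarrow> invertible A"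
    and "Q A" and "0 < \<alpha>" and "above_position f g A \<alpha> a"
    and min: "\<And>A' \<alpha>' a'. Q A' \<Longrightarrow> 0 < \<alpha>' \<Longrightarrow> above_position f g A' \<alpha>' a' \<Longrightarrow>
      position_cost s A \<alpha> \<le> position_cost s A' \<alpha>'"
  shows "solves_loewner s P f (\<lambda>x. \<alpha> * g (A *v x + a))"
  unfolding solves_loewner_def
proof (intro conjI ballI impI allI)
  show "(\<lambda>x. \<alpha> * g (A *v x + a)) \<in> P"
    using assms(5,6) unfolding P by blast
  show "f x \<le> \<alpha> * g (A *v x + a)" for x
    using assms(7) unfolding above_position_def by blast
  fix h
  assume "h \<in> P" and "\<forall>x. f x \<le> h x"
  then obtain A' \<alpha>' a' where h: "h = (\<lambda>x. \<alpha>' * g (A' *v x + a'))" and "Q A'" "0 < \<alpha>'"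
    and "above_position f g A' \<alpha>' a'"
    unfolding P above_position_def by blast
  then have "ennreal (position_cost s A \<alpha>) * lint (\<lambda>x. g x powr s)
      \<le> ennreal (position_cost s A' \<alpha>') * lint (\<lambda>x. g x powr s)"
    using min by (intro mult_right_mono ennreal_leI) auto
  then show "lint (\<lambda>x. (\<alpha> * g (A *v x + a)) powr s) \<le> lint (\<lambda>x. h x powr s)"
    using lint_powr_position[OF assms(1) _ assms(4)] assms(2,5,6) \<open>Q A'\<close> \<open>0 < \<alpha>'\<close>
    unfolding h by simp
qed

theorem mainTheorem15:
  fixes f g :: "real^'n \<Rightarrow> real" and s :: real
  assumes "s > 0"
    and "\<forall>x. f x \<ge> 0" and "\<forall>x. g x \<ge> 0"
    and "proper_fun f" and "proper_fun g"
    and "log_concave f" and "log_concave g"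
    and "\<forall>x. f x \<le> g x"
  shows "(\<exists>h. solves_loewner s (positions g) f h) \<and> (\<exists>h. solves_loewner s (pos_positions g) f h)"
proof
  have ug: "usc g"
    using assms(5) unfolding proper_fun_def by blast
  note attains_min = position_cost_attains_min[OF assms(1,4,5,6,7,3,8)]
  obtain A \<alpha> a where "invertible A" "0 < \<alpha>" "above_position f g A \<alpha> a"
    and "\<forall>A' \<alpha>' a'. A' \<in> UNIV \<longrightarrow> invertible A' \<longrightarrow> 0 < \<alpha>' \<longrightarrow> above_position f g A' \<alpha>' a' \<longrightarrow>
       position_cost s A \<alpha> \<le> position_cost s A' \<alpha>'"
    using attains_min[OF closed_UNIV UNIV_I] by blast
  then have "solves_loewner s (positions g) f (\<lambda>x. \<alpha> * g (A *v x + a))"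
    by (intro solves_loewner_if_min_cost[OF ug assms(3) positions_def]) auto
  then show "\<exists>h. solves_loewner s (positions g) f h"
    by blast
  obtain A \<alpha> a where "pos_def_mat A" "0 < \<alpha>" "above_position f g A \<alpha> a"
    and "\<forall>A' \<alpha>' a'. A' \<in> Collect psd_mat \<longrightarrow> invertible A' \<longrightarrow> 0 < \<alpha>' \<longrightarrow> above_position f g A' \<alpha>' a' \<longrightarrow>
       position_cost s A \<alpha> \<le> position_cost s A' \<alpha>'"
    using attains_min[OF closed_psd_mat] by (auto simp: psd_mat_def pos_def_mat_iff_psd_invertible)
  then have "solves_loewner s (pos_positions g) f (\<lambda>x. \<alpha> * g (A *v x + a))"
    by (intro solves_loewner_if_min_cost[OF ug assms(3) pos_positions_def])
      (auto simp: pos_def_mat_iff_psd_invertible)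
  then show "\<exists>h. solves_loewner s (pos_positions g) f h"
    by blast
qed

end
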